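(* Assume the Standing Setting and let $\theta\in\mathbb{R}^{\mathfrak d}$. Then $\mathcal G(\theta)\in\partial\mathcal L(\theta)$, where $\partial\mathcal L(\theta)$ is the limiting subdifferential of $\mathcal L$ at $\theta$.
   Context: Standing Setting: Let $d,H,\mathfrak d\in\mathbb{N}$ with $\mathfrak d=dH+2H+1$, let $a\in\mathbb{R}$, $b\in(a,\infty)$, $f\in C([a,b]^d,\mathbb{R})$, and let $p\colon[a,b]^d\to[0,\infty)$ be bounded and measurable. Let $\lambda$ be Lebesgue measure on $\mathbb{R}^d$ and $\|\cdot\|$ the Euclidean norm. For $\theta=(\theta_1,\dots,\theta_{\mathfrak d})\in\mathbb{R}^{\mathfrak d}$, $i\in\{1,\dots,H\}$, $j\in\{1,\dots,d\}$ write $w^\theta_{i,j}=\theta_{(i-1)d+j}$, $b^\theta_i=\theta_{Hd+i}$, $v^\theta_i=\theta_{H(d+1)+i}$, $c^\theta=\theta_{\mathfrak d}$. Define $\mathcal N^\theta(x)=c^\theta+\sum_{i=1}^H v^\theta_i\max\{b^\theta_i+\sum_{j=1}^d w^\theta_{i,j}x_j,0\}$ for $x\in\mathbb{R}^d$ and the risk $\mathcal L(\theta)=\int_{[a,b]^d}(f(y)-\mathcal N^\theta(y))^2p(y)\,\lambda(\mathrm{d}y)$. Let $\mathfrak R_r\in C^1(\mathbb{R},\mathbb{R})$, $r\in\mathbb{N}$, satisfy for all $x\in\mathbb{R}$ that $\lim_{r\to\infty}\big(|\mathfrak R_r(x)-\max\{x,0\}|+|(\mathfrak R_r)'(x)-\mathbb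 1_{(0,\infty)}(x)|\big)=0$ and $\sup_{r\in\mathbb{N}}\sup_{y\in[-|x|,|x|]}|(\mathfrak R_r)'(y)|<\infty$, and let $\mathfrak L_r(\theta)=\int_{[a,b]^d}\big(f(y)-c^\theta-\sum_{i=1}^H v^\theta_i\,\mathfrak R_r(b^\theta_i+\sum_{j=1}^d w^\theta_{i,j}y_j)\big)^2p(y)\,\lambda(\mathrm{d}y)$. Let $\mathcal G=(\mathcal G_1,\dots,\mathcal G_{\mathfrak d})\colon\mathbb{R}^{\mathfrak d}\to\mathbb{R}^{\mathfrak d}$ satisfy $\mathcal G(\theta)=\lim_{r\to\infty}(\nabla\mathfrak L_r)(\theta)$ for every $\theta$ at which this limit exists. For $\theta\in\mathbb{R}^{\mathfrak d}$, $i\in\{1,\dots,H\}$ let $I_i^\theta=\{x\in[a,b]^d\colon b^\theta_i+\sum_{j=1}^d w^\theta_{i,j}x_j>0\}$ and let $\mathbf D^\theta=\{i\in\{1,\dots,H\}\colon |b^\theta_i|+\sum_{j=1}^d|w^\theta_{i,j}|=0\}$ (the set of degenerate hidden neurons). For $\varepsilon>0$, $B_\varepsilon(\theta)=\{\vartheta\in\mathbb{R}^{\mathfrak d}\colon\|\theta-\vartheta\|<\varepsilon\}$. Subdifferentials: for $n\in\mathbb{N}$, $g\in C(\mathbb{R}^n,\mathbb{R})$, $x\in\mathbb{R}^n$, the (Fréchet) subdifferential is $\hat\partial g(x)=\{y\in\mathbb{R}^n\colon \liminf_{\mathbb{R}^n\setminus\{0\}\ni h\to0}\frac{g(x+h)-g(x)-\langle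 y,h\rangle}{\|h\|}\ge0\}$, and the limiting subdifferential is $\partial g(x)=\bigcap_{\varepsilon\in(0,\infty)}\overline{\bigcup_{z\in\mathbb{R}^n,\|x-z\|<\varepsilon}\hat\partial g(z)}$ (equivalently, the set of $y$ for which there are $z_k\to x$, $y_k\to y$ with $y_k\in\hat\partial g(z_k)$). *)

theory Defs
  imports "HOL-Analysis.Analysis"
begin

text \<open>Parameter space R^dd with dd = d*H + 2*H + 1, realised (isometrically) as the
  Euclidean space of tuples (W, b, v, c): W the H x d matrix of inner weights,
  b the inner biases, v the outer weights, c the outer bias. Hidden neurons are
  indexed by the finite type 'h (H = CARD('h)), input coordinates by 'd (d = CARD('d)).\<close>

type_synonym ('d, 'h) params = "(real^'d^'h) \<times> (real^'h) \<times> (real^'h) \<times> real"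

definition wgt :: "('d::finite, 'h::finite) params \<Rightarrow> 'h \<Rightarrow> 'd \<Rightarrow> real" where
  "wgt \<theta> i j = (fst \<theta>) $ i $ j"

definition bias :: "('d::finite, 'h::finite) params \<Rightarrow> 'h \<Rightarrow> real" where
  "bias \<theta> i = (fst (snd \<theta>)) $ i"

definition outw :: "('d::finite, 'h::finite) params \<Rightarrow> 'h \<Rightarrow> real" where
  "outw \<theta> i = (fst (snd (snd \<theta>))) $ i"

definition cst :: "('d::finite, 'h::finite) params \<Rightarrow> real" where
  "cst \<theta> = snd (snd (snd \<theta>))"

definition cube :: "real \<Rightarrow> real \<Rightarrow> (real^'d::finite) set" where
  "cube a b = cbox (\<chi> j. a) (\<chi> j. b)"

definition realization :: "('d::finite, 'h::finite) params \<Rightarrow> real^'d \<Rightarrow> real" where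
  "realization \<theta> x = cst \<theta> + (\<Sum>i\<in>UNIV. outw \<theta> i * max (bias \<theta> i + (\<Sum>j\<in>UNIV. wgt \<theta> i j * x $ j)) 0)"

definition risk :: "real \<Rightarrow> real \<Rightarrow> (real^'d::finite \<Rightarrow> real) \<Rightarrow> (real^'d \<Rightarrow> real)
    \<Rightarrow> ('d, 'h::finite) params \<Rightarrow> real" where
  "risk a b f p \<theta> = integral\<^sup>L (lebesgue_on (cube a b))
      (\<lambda>y. (f y - realization \<theta> y)\<^sup>2 * p y)"

definition approx_risk :: "(real \<Rightarrow> real) \<Rightarrow> real \<Rightarrow> real \<Rightarrow> (real^'d::finite \<Rightarrow> real)
    \<Rightarrow> (real^'d \<Rightarrow> real) \<Rightarrow> ('d, 'h::finite) params \<Rightarrow> real" where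
  "approx_risk Rr a b f p \<theta> = integral\<^sup>L (lebesgue_on (cube a b))
      (\<lambda>y. (f y - cst \<theta> - (\<Sum>i\<in>UNIV. outw \<theta> i * Rr (bias \<theta> i + (\<Sum>j\<in>UNIV. wgt \<theta> i j * y $ j))))\<^sup>2 * p y)"

definition frechet_subdiff :: "('a::euclidean_space \<Rightarrow> real) \<Rightarrow> 'a \<Rightarrow> 'a set" where
  "frechet_subdiff g x = {y. Liminf (at 0) (\<lambda>h. ereal ((g (x + h) - g x - inner y h) / norm h)) \<ge> 0}"

definition limiting_subdiff :: "('a::euclidean_space \<Rightarrow> real) \<Rightarrow> 'a \<Rightarrow> 'a set" where
  "limiting_subdiff g x = (\<Inter>\<epsilon>\<in>{0<..}. closure (\<Union>z\<in>{z. dist x z < \<epsilon>}. frechet_subdiff g z))"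

end

theory Submission
  imports Defs
begin

text \<open>For every smooth approximation \<open>R r\<close> of the ReLU the approximate risk is differentiable,
  and its gradient is the integral of the pointwise gradient of the weighted squared loss.
  By dominated convergence these gradients converge to the integral \<open>V\<close> of the pointwise gradient
  in which the ReLU derivative is taken to be the indicator of \<open>(0, \<infinity>)\<close>; hence \<open>G \<theta> = V\<close>.

  To see that \<open>V\<close> lies in the limiting subdifferential, move the bias of every degenerate neuron
  of \<open>\<theta>\<close> to \<open>-\<epsilon>\<close>. At the new parameter no pre-activation vanishes identically, so each
  vanishes only on a hyperplane, a null set, and the risk is differentiable there by
  differentiation under the integral sign. The moved neurons stay inactive, so the gradient there
  is again \<open>V\<close>; letting \<open>\<epsilon>\<close> tend to \<open>0\<close> gives the claim.\<close>

lemma has_derivative_imp_frechet_subdiff: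
  fixes g :: "'a::euclidean_space \<Rightarrow> real"
  assumes "(g has_derivative (\<lambda>h. inner h v)) (at x)"
  shows "v \<in> frechet_subdiff g x"
proof -
  from assms have "((\<lambda>h. (g (x + h) - g x - inner v h) / norm h) \<longlongrightarrow> 0) (at 0)"
    unfolding has_derivative_at by (auto intro: tendsto_norm_zero_cancel simp: inner_commute)
  then have "Liminf (at 0) (\<lambda>h. ereal ((g (x + h) - g x - inner v h) / norm h)) = ereal 0"
    by (intro lim_imp_Liminf tendsto_ereal) auto
  then show ?thesis
    unfolding frechet_subdiff_def by simp
qed

lemma limiting_subdiffI:
  assumes "\<And>e. e > 0 \<Longrightarrow> \<exists>z. dist x z < e \<and> v \<in> frechet_subdiff g z"
  shows "v \<in> limiting_subdiff g x"
  unfolding limiting_subdiff_def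
proof
  fix e :: real
  assume "e \<in> {0<..}"
  then obtain z where "dist x z < e" "v \<in> frechet_subdiff g z"
    using assms by auto
  then show "v \<in> closure (\<Union>z\<in>{z. dist x z < e}. frechet_subdiff g z)"
    using closure_subset by fastforce
qed

lemma integral_difference_quotient_tendsto_0:
  fixes q :: "'p::euclidean_space \<Rightarrow> 'a \<Rightarrow> real" and g :: "'a \<Rightarrow> 'p"
    and X :: "nat \<Rightarrow> 'p"
  assumes "finite_measure M"
    and X: "X \<longlonglongrightarrow> 0" "\<And>n. X n \<noteq> 0"
    and meas: "\<And>n. q (\<theta>\<^sub>0 + X n) \<in> borel_measurable M" "q \<theta>\<^sub>0 \<in> borel_measurable M"
      "g \<in> borel_measurable M"
    and g_bound: "\<And>y. y \<in> space M \<Longrightarrow> norm (g y) \<le> B"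
    and lip: "\<And>n y. y \<in> space M \<Longrightarrow> \<bar>q (\<theta>\<^sub>0 + X n) y - q \<theta>\<^sub>0 y\<bar> \<le> K * norm (X n)"
    and der: "AE y in M. ((\<lambda>\<theta>. q \<theta> y) has_derivative (\<lambda>h. inner h (g y))) (at \<theta>\<^sub>0)"
  shows "(\<lambda>n. integral\<^sup>L M (\<lambda>y. q (\<theta>\<^sub>0 + X n) y - q \<theta>\<^sub>0 y - inner (X n) (g y)) / norm (X n))
           \<longlonglongrightarrow> 0"
proof -
  interpret finite_measure M by fact
  define e where "e n y = (q (\<theta>\<^sub>0 + X n) y - q \<theta>\<^sub>0 y - inner (X n) (g y)) / norm (X n)" for n y
  have "(\<lambda>n. integral\<^sup>L M (e n)) \<longlonglongrightarrow> integral\<^sup>L M (\<lambda>_. 0)"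
  proof (rule integral_dominated_convergence[where w="\<lambda>_. K + B"])
    show "e n \<in> borel_measurable M" for n
      unfolding e_def using meas by measurable
    show "AE y in M. (\<lambda>n. e n y) \<longlonglongrightarrow> 0"
      using der
    proof eventually_elim
      case (elim y)
      then have "((\<lambda>h. norm (q (\<theta>\<^sub>0 + h) y - q \<theta>\<^sub>0 y - inner h (g y)) / norm h) \<longlongrightarrow> 0) (at 0)"
        unfolding has_derivative_at by simp
      then have "(\<lambda>n. norm (e n y)) \<longlonglongrightarrow> 0"
        using X unfolding tendsto_at_iff_sequentially by (auto simp: e_def o_def)
      then show ?case
        by (rule tendsto_norm_zero_cancel)
    qed
    show "AE y in M. norm (e n y) \<le> K + B" for n
    proof (rule AE_I2)
      fix y
      assume y: "y \<in> space M"
      have "\<bar>inner (X n) (g y)\<bar> \<le> norm (X n) * B"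
        using Cauchy_Schwarz_ineq2[of "X n" "g y"] mult_left_mono[OF g_bound[OF y] norm_ge_zero[of "X n"]]
        by linarith
      then have "\<bar>q (\<theta>\<^sub>0 + X n) y - q \<theta>\<^sub>0 y - inner (X n) (g y)\<bar> \<le> (K + B) * norm (X n)"
        using lip[OF y, of n] by (simp add: algebra_simps)
      then show "norm (e n y) \<le> K + B"
        using X(2)[of n] by (simp add: e_def divide_le_eq)
    qed
  qed auto
  moreover have "integral\<^sup>L M (e n) =
      integral\<^sup>L M (\<lambda>y. q (\<theta>\<^sub>0 + X n) y - q \<theta>\<^sub>0 y - inner (X n) (g y)) / norm (X n)" for n
    unfolding e_def by (rule integral_divide_zero)
  ultimately show ?thesis
    by simp
qed

lemma has_derivative_integral:
  fixes q :: "'p::euclidean_space \<Rightarrow> 'a \<Rightarrow> real" and g :: "'a \<Rightarrow> 'p"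
  assumes "finite_measure M" and "\<delta> > 0"
    and meas: "\<And>\<theta>. \<theta> \<in> ball \<theta>\<^sub>0 \<delta> \<Longrightarrow> q \<theta> \<in> borel_measurable M"
    and int0: "integrable M (q \<theta>\<^sub>0)"
    and gm: "g \<in> borel_measurable M" and g_bound: "\<And>y. y \<in> space M \<Longrightarrow> norm (g y) \<le> B"
    and lip: "\<And>\<theta> y. \<theta> \<in> ball \<theta>\<^sub>0 \<delta> \<Longrightarrow> y \<in> space M \<Longrightarrow> \<bar>q \<theta> y - q \<theta>\<^sub>0 y\<bar> \<le> K * norm (\<theta> - \<theta>\<^sub>0)"
    and der: "AE y in M. ((\<lambda>\<theta>. q \<theta> y) has_derivative (\<lambda>h. inner h (g y))) (at \<theta>\<^sub>0)"
  shows "((\<lambda>\<theta>. integral\<^sup>L M (q \<theta>)) has_derivative (\<lambda>h. inner h (integral\<^sup>L M g))) (at \<theta>\<^sub>0)"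
proof -
  interpret finite_measure M by fact
  have integrable: "integrable M (q \<theta>)" if "\<theta> \<in> ball \<theta>\<^sub>0 \<delta>" for \<theta>
  proof -
    have "integrable M (\<lambda>y. q \<theta> y - q \<theta>\<^sub>0 y)"
      using lip[OF that] meas[OF that] int0
      by (intro integrable_const_bound[where B="K * norm (\<theta> - \<theta>\<^sub>0)"]) auto
    then have "integrable M (\<lambda>y. (q \<theta> y - q \<theta>\<^sub>0 y) + q \<theta>\<^sub>0 y)"
      using int0 by (rule Bochner_Integration.integrable_add)
    then show ?thesis by simp
  qed
  have "integrable M g"
    using g_bound gm by (intro integrable_const_bound[where B=B]) auto
  then have difference: "integral\<^sup>L M (\<lambda>y. q (\<theta>\<^sub>0 + h) y - q \<theta>\<^sub>0 y - inner h (g y)) =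
      integral\<^sup>L M (q (\<theta>\<^sub>0 + h)) - integral\<^sup>L M (q \<theta>\<^sub>0) - inner h (integral\<^sup>L M g)"
    if "h \<in> ball 0 \<delta>" for h
    using integrable[of "\<theta>\<^sub>0 + h"] that int0 by (simp add: dist_norm integrable_inner_right)
  have "((\<lambda>h. (integral\<^sup>L M (q (\<theta>\<^sub>0 + h)) - integral\<^sup>L M (q \<theta>\<^sub>0) - inner h (integral\<^sup>L M g)) / norm h)
      \<longlongrightarrow> 0) (at 0 within ball 0 \<delta>)"
    unfolding tendsto_at_iff_sequentially o_def
  proof (intro allI impI)
    fix X :: "nat \<Rightarrow> 'p"
    assume X: "\<forall>n. X n \<in> ball 0 \<delta> - {0}" "X \<longlonglongrightarrow> 0"
    then have ball: "\<theta>\<^sub>0 + X n \<in> ball \<theta>\<^sub>0 \<delta>" for n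
      by (auto simp: dist_norm)
    have "(\<lambda>n. integral\<^sup>L M (\<lambda>y. q (\<theta>\<^sub>0 + X n) y - q \<theta>\<^sub>0 y - inner (X n) (g y)) / norm (X n))
        \<longlonglongrightarrow> 0"
    proof (rule integral_difference_quotient_tendsto_0[OF \<open>finite_measure M\<close> _ _ _ _ gm g_bound _ der])
      show "\<bar>q (\<theta>\<^sub>0 + X n) y - q \<theta>\<^sub>0 y\<bar> \<le> K * norm (X n)" if "y \<in> space M" for n y
        using lip[OF ball that] by simp
    qed (use X ball meas[of \<theta>\<^sub>0] meas[OF ball] \<open>\<delta> > 0\<close> in auto)
    then show "(\<lambda>n. (integral\<^sup>L M (q (\<theta>\<^sub>0 + X n)) - integral\<^sup>L M (q \<theta>\<^sub>0)
        - inner (X n) (integral\<^sup>L M g)) / norm (X n)) \<longlonglongrightarrow> 0"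
      using X difference by simp
  qed
  moreover have "at (0::'p) within ball 0 \<delta> = at 0"
    using \<open>\<delta> > 0\<close> by (intro at_within_open) auto
  ultimately have "((\<lambda>h. norm (integral\<^sup>L M (q (\<theta>\<^sub>0 + h)) - integral\<^sup>L M (q \<theta>\<^sub>0)
      - inner h (integral\<^sup>L M g)) / norm h) \<longlongrightarrow> 0) (at 0)"
    using tendsto_norm_zero by fastforce
  then show ?thesis
    unfolding has_derivative_at using bounded_linear_inner_left by blast
qed

lemma abs_le_of_lipschitz_on:
  fixes \<sigma> :: "real \<Rightarrow> real"
  assumes "L-lipschitz_on {-M..M} \<sigma>" "\<bar>x\<bar> \<le> M"
  shows "\<bar>\<sigma> x\<bar> \<le> \<bar>\<sigma> 0\<bar> + L * M"
proof -
  have "x \<in> {-M..M}" "0 \<in> {-M..M}"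
    using assms(2) by auto
  then have "\<bar>\<sigma> x - \<sigma> 0\<bar> \<le> L * \<bar>x\<bar>"
    using lipschitz_on_normD[OF assms(1)] by fastforce
  moreover have "L * \<bar>x\<bar> \<le> L * M"
    using assms lipschitz_on_nonneg by (auto intro: mult_left_mono)
  ultimately show ?thesis
    by linarith
qed

lemma uniformly_bounded_of_derivative_bound:
  fixes \<sigma> \<sigma>' :: "nat \<Rightarrow> real \<Rightarrow> real"
  assumes derivative: "\<And>r x. (\<sigma> r has_real_derivative \<sigma>' r x) (at x)"
    and convergent: "convergent (\<lambda>r. \<sigma> r 0)"
    and derivative_bound: "\<And>r x. x \<in> {-M..M} \<Longrightarrow> \<bar>\<sigma>' r x\<bar> \<le> C"
  shows "\<exists>B. \<forall>r. \<forall>x\<in>{-M..M}. \<bar>\<sigma> r x\<bar> \<le> B"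
proof -
  obtain B0 where B0: "\<And>r. \<bar>\<sigma> r 0\<bar> \<le> B0"
    using convergent_imp_Bseq[OF convergent] by (auto simp: Bseq_iff)
  have "\<bar>\<sigma> r x\<bar> \<le> B0 + C * M" if "x \<in> {-M..M}" for r x
  proof -
    have "\<bar>\<sigma> r x - \<sigma> r 0\<bar> \<le> C * \<bar>x - 0\<bar>"
      using that derivative derivative_bound
      by (intro field_differentiable_bound[where S="{-M..M}" and f'="\<sigma>' r", simplified])
        (auto intro: has_field_derivative_at_within)
    moreover have "C * \<bar>x\<bar> \<le> C * M"
      using that derivative_bound[of x 0] by (intro mult_left_mono) auto
    ultimately show ?thesis
      using B0[of r] by simp
  qed
  then show ?thesis
    by blast
qed

text \<open>The network depends on the parameter only through inner products with the following
  fixed vectors; this makes its gradient explicit.\<close>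

definition neuron_vec :: "real^'d \<Rightarrow> 'h \<Rightarrow> ('d::finite, 'h::finite) params" where
  "neuron_vec y i = (axis i y, axis i 1, 0, 0)"

definition outw_vec :: "'h \<Rightarrow> ('d::finite, 'h::finite) params" where
  "outw_vec i = (0, 0, axis i 1, 0)"

definition cst_vec :: "('d::finite, 'h::finite) params" where
  "cst_vec = (0, 0, 0, 1)"

lemma inner_neuron_vec: "inner \<theta> (neuron_vec y i) = bias \<theta> i + (\<Sum>j\<in>UNIV. wgt \<theta> i j * y $ j)"
  by (cases \<theta>) (auto simp: neuron_vec_def axis_def inner_vec_def bias_def wgt_def if_distrib cong: if_cong)

lemma inner_outw_vec: "inner \<theta> (outw_vec i) = outw \<theta> i"
  by (cases \<theta>) (auto simp: outw_vec_def axis_def inner_vec_def outw_def if_distrib cong: if_cong)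

lemma inner_cst_vec: "inner \<theta> cst_vec = cst \<theta>"
  by (cases \<theta>) (auto simp: cst_vec_def cst_def)

lemma norm_axis: "norm (axis i y :: 'a::real_normed_vector^'n::finite) = norm y"
proof -
  have "(\<Sum>j\<in>UNIV. (norm (axis i y $ j))\<^sup>2) = (\<Sum>j\<in>UNIV. if j = i then (norm y)\<^sup>2 else 0)"
    by (rule sum.cong) (auto simp: axis_def)
  then show ?thesis
    by (simp add: norm_vec_def L2_set_def)
qed

lemma norm_outw_vec: "norm (outw_vec i :: ('d::finite, 'h::finite) params) = 1"
  by (simp add: outw_vec_def norm_Pair norm_axis)

lemma norm_cst_vec: "norm (cst_vec :: ('d::finite, 'h::finite) params) = 1"
  by (simp add: cst_vec_def norm_Pair)

lemma norm_neuron_vec_le: "norm (neuron_vec y i :: ('d::finite, 'h::finite) params) \<le> norm y + 1"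
proof -
  have "norm (neuron_vec y i :: ('d, 'h) params) = sqrt ((norm y)\<^sup>2 + 1)"
    by (simp add: neuron_vec_def norm_Pair norm_axis)
  also have "\<dots> \<le> norm y + 1"
    by (rule real_le_lsqrt) (auto simp: power2_eq_square algebra_simps)
  finally show ?thesis .
qed

lemma abs_inner_neuron_vec_le:
  assumes "norm \<theta> \<le> T" "norm y \<le> Y"
  shows "\<bar>inner \<theta> (neuron_vec y i)\<bar> \<le> T * (Y + 1)"
proof -
  have "\<bar>inner \<theta> (neuron_vec y i)\<bar> \<le> norm \<theta> * norm (neuron_vec y i)"
    by (rule Cauchy_Schwarz_ineq2)
  also have "\<dots> \<le> T * (Y + 1)"
    using assms norm_neuron_vec_le[of y i] by (intro mult_mono) (auto intro: order_trans[OF norm_ge_zero])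
  finally show ?thesis .
qed

lemma abs_inner_outw_vec_le: "\<bar>inner \<theta> (outw_vec i)\<bar> \<le> norm \<theta>"
  using Cauchy_Schwarz_ineq2[of \<theta> "outw_vec i"] by (simp add: norm_outw_vec)

lemma abs_inner_cst_vec_le: "\<bar>inner \<theta> cst_vec\<bar> \<le> norm \<theta>"
  using Cauchy_Schwarz_ineq2[of \<theta> cst_vec] by (simp add: norm_cst_vec)

definition network :: "(real \<Rightarrow> real) \<Rightarrow> ('d::finite, 'h::finite) params \<Rightarrow> real^'d \<Rightarrow> real" where
  "network \<sigma> \<theta> y = inner \<theta> cst_vec + (\<Sum>i\<in>UNIV. inner \<theta> (outw_vec i) * \<sigma> (inner \<theta> (neuron_vec y i)))"

definition network_grad :: "(real \<Rightarrow> real) \<Rightarrow> (real \<Rightarrow> real) \<Rightarrow> ('d::finite, 'h::finite) params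
    \<Rightarrow> real^'d \<Rightarrow> ('d, 'h) params" where
  "network_grad \<sigma> \<sigma>' \<theta> y = cst_vec + (\<Sum>i\<in>UNIV. \<sigma> (inner \<theta> (neuron_vec y i)) *\<^sub>R outw_vec i
       + (inner \<theta> (outw_vec i) * \<sigma>' (inner \<theta> (neuron_vec y i))) *\<^sub>R neuron_vec y i)"

lemma has_derivative_network:
  fixes \<theta> :: "('d::finite, 'h::finite) params"
  assumes "\<And>i. (\<sigma> has_real_derivative \<sigma>' (inner \<theta> (neuron_vec y i))) (at (inner \<theta> (neuron_vec y i)))"
  shows "((\<lambda>\<theta>. network \<sigma> \<theta> y) has_derivative (\<lambda>h. inner h (network_grad \<sigma> \<sigma>' \<theta> y))) (at \<theta>)"
proof -
  have linear: "((\<lambda>\<theta>. inner \<theta> v) has_derivative (\<lambda>h. inner h v)) (at \<theta>)" for v :: "('d, 'h) params"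
    by (rule bounded_linear_imp_has_derivative) (rule bounded_linear_inner_left)
  have activation: "((\<lambda>\<theta>. \<sigma> (inner \<theta> (neuron_vec y i))) has_derivative
      (\<lambda>h. \<sigma>' (inner \<theta> (neuron_vec y i)) * inner h (neuron_vec y i))) (at \<theta>)" for i
    using has_derivative_compose[OF linear assms[of i, unfolded has_field_derivative_def]]
    by (simp add: mult.commute)
  have "((\<lambda>\<theta>. network \<sigma> \<theta> y) has_derivative (\<lambda>h. inner h cst_vec +
      (\<Sum>i\<in>UNIV. inner \<theta> (outw_vec i) * (\<sigma>' (inner \<theta> (neuron_vec y i)) * inner h (neuron_vec y i))
        + inner h (outw_vec i) * \<sigma> (inner \<theta> (neuron_vec y i))))) (at \<theta>)"
    unfolding network_def
    by (intro has_derivative_add has_derivative_sum linear has_derivative_mult[OF linear activation])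
  then show ?thesis
    by (rule has_derivative_eq_rhs)
      (auto simp: network_grad_def inner_add_right inner_sum_right algebra_simps)
qed

lemma abs_network_le:
  fixes \<theta> :: "('d::finite, 'h::finite) params"
  assumes "norm \<theta> \<le> T" "norm y \<le> Y"
    and S: "\<And>x. \<bar>x\<bar> \<le> T * (Y + 1) \<Longrightarrow> \<bar>\<sigma> x\<bar> \<le> S"
  shows "\<bar>network \<sigma> \<theta> y\<bar> \<le> T + real CARD('h) * (T * S)"
proof -
  have "\<bar>network \<sigma> \<theta> y\<bar> \<le> \<bar>inner \<theta> cst_vec\<bar> + (\<Sum>i\<in>UNIV. \<bar>inner \<theta> (outw_vec i) * \<sigma> (inner \<theta> (neuron_vec y i))\<bar>)"
    unfolding network_def by (rule order_trans[OF abs_triangle_ineq add_left_mono[OF sum_abs]])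
  also have "\<dots> \<le> T + (\<Sum>i\<in>(UNIV::'h set). T * S)"
  proof (intro add_mono sum_mono)
    show "\<bar>inner \<theta> cst_vec\<bar> \<le> T"
      using abs_inner_cst_vec_le[of \<theta>] assms by linarith
    show "\<bar>inner \<theta> (outw_vec i) * \<sigma> (inner \<theta> (neuron_vec y i))\<bar> \<le> T * S" for i
      unfolding abs_mult using abs_inner_outw_vec_le[of \<theta> i] assms S[OF abs_inner_neuron_vec_le[OF assms(1,2)]]
      by (intro mult_mono) auto
  qed
  finally show ?thesis by simp
qed

lemma network_diff:
  "network \<sigma> \<theta> y - network \<sigma> \<theta>' y = inner (\<theta> - \<theta>') cst_vec +
     (\<Sum>i\<in>UNIV. inner (\<theta> - \<theta>') (outw_vec i) * \<sigma> (inner \<theta> (neuron_vec y i))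
        + inner \<theta>' (outw_vec i) * (\<sigma> (inner \<theta> (neuron_vec y i)) - \<sigma> (inner \<theta>' (neuron_vec y i))))"
proof -
  have "network \<sigma> \<theta> y - network \<sigma> \<theta>' y = (inner \<theta> cst_vec - inner \<theta>' cst_vec) +
      (\<Sum>i\<in>UNIV. inner \<theta> (outw_vec i) * \<sigma> (inner \<theta> (neuron_vec y i))
        - inner \<theta>' (outw_vec i) * \<sigma> (inner \<theta>' (neuron_vec y i)))"
    unfolding network_def by (simp add: sum_subtractf)
  also have "\<dots> = inner (\<theta> - \<theta>') cst_vec +
     (\<Sum>i\<in>UNIV. inner (\<theta> - \<theta>') (outw_vec i) * \<sigma> (inner \<theta> (neuron_vec y i))
        + inner \<theta>' (outw_vec i) * (\<sigma> (inner \<theta> (neuron_vec y i)) - \<sigma> (inner \<theta>' (neuron_vec y i))))"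
    by (intro arg_cong2[where f="(+)"] sum.cong) (auto simp: inner_diff_left algebra_simps)
  finally show ?thesis .
qed

lemma network_lipschitz:
  fixes \<theta> \<theta>' :: "('d::finite, 'h::finite) params"
  assumes "norm \<theta> \<le> T" "norm \<theta>' \<le> T" "norm y \<le> Y"
    and S: "\<And>x. \<bar>x\<bar> \<le> T * (Y + 1) \<Longrightarrow> \<bar>\<sigma> x\<bar> \<le> S"
    and L: "L-lipschitz_on {- (T * (Y + 1))..T * (Y + 1)} \<sigma>"
  shows "\<bar>network \<sigma> \<theta> y - network \<sigma> \<theta>' y\<bar> \<le> (1 + real CARD('h) * (S + T * L * (Y + 1))) * norm (\<theta> - \<theta>')"
proof -
  define d where "d = norm (\<theta> - \<theta>')"
  have "\<bar>network \<sigma> \<theta> y - network \<sigma> \<theta>' y\<bar> \<le> \<bar>inner (\<theta> - \<theta>') cst_vec\<bar> +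
     (\<Sum>i\<in>UNIV. \<bar>inner (\<theta> - \<theta>') (outw_vec i) * \<sigma> (inner \<theta> (neuron_vec y i))
        + inner \<theta>' (outw_vec i) * (\<sigma> (inner \<theta> (neuron_vec y i)) - \<sigma> (inner \<theta>' (neuron_vec y i)))\<bar>)"
    unfolding network_diff by (rule order_trans[OF abs_triangle_ineq add_left_mono[OF sum_abs]])
  also have "\<dots> \<le> d + (\<Sum>i\<in>(UNIV::'h set). d * S + T * (L * (d * (Y + 1))))"
  proof (intro add_mono sum_mono)
    show "\<bar>inner (\<theta> - \<theta>') cst_vec\<bar> \<le> d"
      using abs_inner_cst_vec_le[of "\<theta> - \<theta>'"] by (simp add: d_def)
    fix i
    have z: "\<bar>inner \<theta> (neuron_vec y i)\<bar> \<le> T * (Y + 1)" "\<bar>inner \<theta>' (neuron_vec y i)\<bar> \<le> T * (Y + 1)"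
      using abs_inner_neuron_vec_le assms by blast+
    have "\<bar>inner (\<theta> - \<theta>') (outw_vec i) * \<sigma> (inner \<theta> (neuron_vec y i))\<bar> \<le> d * S"
      unfolding abs_mult using abs_inner_outw_vec_le[of "\<theta> - \<theta>'" i] S[OF z(1)]
      by (intro mult_mono) (auto simp: d_def)
    moreover have "\<bar>inner \<theta> (neuron_vec y i) - inner \<theta>' (neuron_vec y i)\<bar> \<le> d * (Y + 1)"
      using abs_inner_neuron_vec_le[of "\<theta> - \<theta>'" d y Y i] assms by (simp add: d_def inner_diff_left)
    then have "\<bar>\<sigma> (inner \<theta> (neuron_vec y i)) - \<sigma> (inner \<theta>' (neuron_vec y i))\<bar> \<le> L * (d * (Y + 1))"
      using lipschitz_on_normD[OF L, of "inner \<theta> (neuron_vec y i)" "inner \<theta>' (neuron_vec y i)"] z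
        mult_left_mono[OF _ lipschitz_on_nonneg[OF L]] by fastforce
    then have "\<bar>inner \<theta>' (outw_vec i) * (\<sigma> (inner \<theta> (neuron_vec y i)) - \<sigma> (inner \<theta>' (neuron_vec y i)))\<bar>
        \<le> T * (L * (d * (Y + 1)))"
      unfolding abs_mult using abs_inner_outw_vec_le[of \<theta>' i] assms(2)
      by (intro mult_mono) auto
    ultimately show "\<bar>inner (\<theta> - \<theta>') (outw_vec i) * \<sigma> (inner \<theta> (neuron_vec y i))
        + inner \<theta>' (outw_vec i) * (\<sigma> (inner \<theta> (neuron_vec y i)) - \<sigma> (inner \<theta>' (neuron_vec y i)))\<bar>
        \<le> d * S + T * (L * (d * (Y + 1)))"
      by linarith
  qed
  also have "\<dots> = (1 + real CARD('h) * (S + T * L * (Y + 1))) * d"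
    by (simp add: algebra_simps)
  finally show ?thesis by (simp add: d_def)
qed

lemma norm_network_grad_le:
  fixes \<theta> :: "('d::finite, 'h::finite) params"
  assumes "norm \<theta> \<le> T" "norm y \<le> Y"
    and S: "\<And>x. \<bar>x\<bar> \<le> T * (Y + 1) \<Longrightarrow> \<bar>\<sigma> x\<bar> \<le> S"
    and S': "\<And>x. \<bar>x\<bar> \<le> T * (Y + 1) \<Longrightarrow> \<bar>\<sigma>' x\<bar> \<le> S'"
  shows "norm (network_grad \<sigma> \<sigma>' \<theta> y) \<le> 1 + real CARD('h) * (S + T * S' * (Y + 1))"
proof -
  have "norm (network_grad \<sigma> \<sigma>' \<theta> y) \<le> norm (cst_vec :: ('d, 'h) params) +
      (\<Sum>i\<in>UNIV. norm (\<sigma> (inner \<theta> (neuron_vec y i)) *\<^sub>R outw_vec i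
        + (inner \<theta> (outw_vec i) * \<sigma>' (inner \<theta> (neuron_vec y i))) *\<^sub>R neuron_vec y i))"
    unfolding network_grad_def by (rule order_trans[OF norm_triangle_ineq add_left_mono[OF norm_sum]])
  also have "\<dots> \<le> 1 + (\<Sum>i\<in>(UNIV::'h set). S + T * S' * (Y + 1))"
  proof (intro add_mono sum_mono)
    show "norm (cst_vec :: ('d, 'h) params) \<le> 1"
      by (simp add: norm_cst_vec)
    fix i
    have z: "\<bar>inner \<theta> (neuron_vec y i)\<bar> \<le> T * (Y + 1)"
      using abs_inner_neuron_vec_le assms by blast
    have "norm (\<sigma> (inner \<theta> (neuron_vec y i)) *\<^sub>R (outw_vec i :: ('d, 'h) params)) \<le> S"
      using S[OF z] by (simp add: norm_outw_vec)
    moreover have "norm ((inner \<theta> (outw_vec i) * \<sigma>' (inner \<theta> (neuron_vec y i))) *\<^sub>R neuron_vec y i)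
        \<le> T * S' * (Y + 1)"
      unfolding norm_scaleR abs_mult
      using abs_inner_outw_vec_le[of \<theta> i] assms S'[OF z] norm_neuron_vec_le[of y i]
      by (intro mult_mono) (auto intro: order_trans[OF norm_ge_zero])
    ultimately show "norm (\<sigma> (inner \<theta> (neuron_vec y i)) *\<^sub>R outw_vec i
        + (inner \<theta> (outw_vec i) * \<sigma>' (inner \<theta> (neuron_vec y i))) *\<^sub>R neuron_vec y i) \<le> S + T * S' * (Y + 1)"
      by (meson add_mono norm_triangle_ineq order_trans)
  qed
  finally show ?thesis by simp
qed

lemma continuous_on_neuron_vec: "continuous_on UNIV (\<lambda>y. neuron_vec y i)"
  unfolding neuron_vec_def axis_def
proof (intro continuous_on_Pair continuous_on_const continuous_on_vec_lambda)
  show "continuous_on UNIV (\<lambda>y::real^'d. if j = i then y else 0)" for j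
    by (cases "j = i") (auto intro: continuous_intros)
qed

lemma measurable_inner_neuron_vec [measurable]:
  "S \<in> sets lebesgue \<Longrightarrow> (\<lambda>y. inner \<theta> (neuron_vec y i)) \<in> borel_measurable (lebesgue_on S)"
  by (intro continuous_imp_measurable_on_sets_lebesgue continuous_on_subset[OF
        continuous_on_inner[OF continuous_on_const continuous_on_neuron_vec]]) auto

lemma measurable_neuron_vec [measurable]:
  "S \<in> sets lebesgue \<Longrightarrow> (\<lambda>y. neuron_vec y i) \<in> borel_measurable (lebesgue_on S)"
  by (intro continuous_imp_measurable_on_sets_lebesgue continuous_on_subset[OF continuous_on_neuron_vec]) auto

lemma measurable_network [measurable]:
  assumes "\<sigma> \<in> borel_measurable borel" "S \<in> sets lebesgue"
  shows "network \<sigma> \<theta> \<in> borel_measurable (lebesgue_on S)"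
  unfolding network_def using assms by measurable

lemma measurable_network_grad [measurable]:
  assumes "\<sigma> \<in> borel_measurable borel" "\<sigma>' \<in> borel_measurable borel" "S \<in> sets lebesgue"
  shows "network_grad \<sigma> \<sigma>' \<theta> \<in> borel_measurable (lebesgue_on S)"
  unfolding network_grad_def using assms by measurable

definition sq_loss :: "(real^'d \<Rightarrow> real) \<Rightarrow> (real^'d \<Rightarrow> real) \<Rightarrow> (real \<Rightarrow> real)
    \<Rightarrow> ('d::finite, 'h::finite) params \<Rightarrow> real^'d \<Rightarrow> real" where
  "sq_loss f p \<sigma> \<theta> y = (f y - network \<sigma> \<theta> y)\<^sup>2 * p y"

definition sq_loss_grad :: "(real^'d \<Rightarrow> real) \<Rightarrow> (real^'d \<Rightarrow> real) \<Rightarrow> (real \<Rightarrow> real) \<Rightarrow> (real \<Rightarrow> real)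
    \<Rightarrow> ('d::finite, 'h::finite) params \<Rightarrow> real^'d \<Rightarrow> ('d, 'h) params" where
  "sq_loss_grad f p \<sigma> \<sigma>' \<theta> y = (- 2 * (f y - network \<sigma> \<theta> y) * p y) *\<^sub>R network_grad \<sigma> \<sigma>' \<theta> y"

lemma has_derivative_sq_loss:
  fixes \<theta> :: "('d::finite, 'h::finite) params"
  assumes "\<And>i. (\<sigma> has_real_derivative \<sigma>' (inner \<theta> (neuron_vec y i))) (at (inner \<theta> (neuron_vec y i)))"
  shows "((\<lambda>\<theta>. sq_loss f p \<sigma> \<theta> y) has_derivative (\<lambda>h. inner h (sq_loss_grad f p \<sigma> \<sigma>' \<theta> y))) (at \<theta>)"
proof -
  have "((\<lambda>\<theta>. f y - network \<sigma> \<theta> y) has_derivative (\<lambda>h. - inner h (network_grad \<sigma> \<sigma>' \<theta> y))) (at \<theta>)"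
    using has_derivative_diff[OF has_derivative_const has_derivative_network[OF assms]] by simp
  from has_derivative_mult_left[OF has_derivative_mult[OF this this]]
  show ?thesis
    unfolding sq_loss_def sq_loss_grad_def power2_eq_square
    by (rule has_derivative_eq_rhs) (auto simp: algebra_simps)
qed

lemma sq_loss_lipschitz:
  fixes \<theta> \<theta>' :: "('d::finite, 'h::finite) params"
  assumes "norm \<theta> \<le> T" "norm \<theta>' \<le> T" "norm y \<le> Y"
    and "\<bar>f y\<bar> \<le> F" "0 \<le> p y" "p y \<le> P"
    and "\<And>x. \<bar>x\<bar> \<le> T * (Y + 1) \<Longrightarrow> \<bar>\<sigma> x\<bar> \<le> S"
    and "L-lipschitz_on {- (T * (Y + 1))..T * (Y + 1)} \<sigma>"
  shows "\<bar>sq_loss f p \<sigma> \<theta> y - sq_loss f p \<sigma> \<theta>' y\<bar> \<le>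
     ((1 + real CARD('h) * (S + T * L * (Y + 1))) * (2 * F + 2 * (T + real CARD('h) * (T * S))) * P)
       * norm (\<theta> - \<theta>')"
proof -
  define N where "N = T + real CARD('h) * (T * S)"
  define K where "K = 1 + real CARD('h) * (S + T * L * (Y + 1))"
  have "\<bar>network \<sigma> \<theta> y\<bar> \<le> N" "\<bar>network \<sigma> \<theta>' y\<bar> \<le> N"
    using abs_network_le assms unfolding N_def by blast+
  moreover have "\<bar>network \<sigma> \<theta> y - network \<sigma> \<theta>' y\<bar> \<le> K * norm (\<theta> - \<theta>')"
    using network_lipschitz assms unfolding K_def by blast
  moreover have "sq_loss f p \<sigma> \<theta> y - sq_loss f p \<sigma> \<theta>' y
      = (network \<sigma> \<theta> y - network \<sigma> \<theta>' y) * (network \<sigma> \<theta> y + network \<sigma> \<theta>' y - 2 * f y) * p y"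
    unfolding sq_loss_def by (simp add: power2_eq_square algebra_simps)
  then have "\<bar>sq_loss f p \<sigma> \<theta> y - sq_loss f p \<sigma> \<theta>' y\<bar>
      = \<bar>network \<sigma> \<theta> y - network \<sigma> \<theta>' y\<bar> * \<bar>network \<sigma> \<theta> y + network \<sigma> \<theta>' y - 2 * f y\<bar> * p y"
    using assms(5) by (simp add: abs_mult)
  ultimately have "\<bar>sq_loss f p \<sigma> \<theta> y - sq_loss f p \<sigma> \<theta>' y\<bar> \<le> (K * norm (\<theta> - \<theta>')) * (2 * F + 2 * N) * P"
    using assms(4-6) by (auto intro!: mult_mono)
  then show ?thesis
    by (simp add: N_def K_def algebra_simps)
qed

lemma abs_sq_loss_le:
  fixes \<theta> :: "('d::finite, 'h::finite) params"
  assumes "norm \<theta> \<le> T" "norm y \<le> Y"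
    and "\<bar>f y\<bar> \<le> F" "0 \<le> p y" "p y \<le> P"
    and "\<And>x. \<bar>x\<bar> \<le> T * (Y + 1) \<Longrightarrow> \<bar>\<sigma> x\<bar> \<le> S"
  shows "\<bar>sq_loss f p \<sigma> \<theta> y\<bar> \<le> (F + (T + real CARD('h) * (T * S)))\<^sup>2 * P"
proof -
  have "\<bar>f y - network \<sigma> \<theta> y\<bar> \<le> F + (T + real CARD('h) * (T * S))"
    using abs_network_le[of \<theta> T y Y \<sigma> S] assms by fastforce
  then have "(f y - network \<sigma> \<theta> y)\<^sup>2 \<le> (F + (T + real CARD('h) * (T * S)))\<^sup>2"
    by (metis abs_ge_zero power2_abs power_mono)
  then show ?thesis
    using assms(4,5) unfolding sq_loss_def by (simp add: abs_mult mult_mono)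
qed

lemma norm_sq_loss_grad_le:
  fixes \<theta> :: "('d::finite, 'h::finite) params"
  assumes "norm \<theta> \<le> T" "norm y \<le> Y"
    and "\<bar>f y\<bar> \<le> F" "0 \<le> p y" "p y \<le> P"
    and "\<And>x. \<bar>x\<bar> \<le> T * (Y + 1) \<Longrightarrow> \<bar>\<sigma> x\<bar> \<le> S"
    and "\<And>x. \<bar>x\<bar> \<le> T * (Y + 1) \<Longrightarrow> \<bar>\<sigma>' x\<bar> \<le> S'"
  shows "norm (sq_loss_grad f p \<sigma> \<sigma>' \<theta> y) \<le>
    2 * (F + (T + real CARD('h) * (T * S))) * P * (1 + real CARD('h) * (S + T * S' * (Y + 1)))"
proof -
  have "\<bar>f y - network \<sigma> \<theta> y\<bar> \<le> F + (T + real CARD('h) * (T * S))"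
    using abs_network_le[of \<theta> T y Y \<sigma> S] assms by fastforce
  moreover have "norm (network_grad \<sigma> \<sigma>' \<theta> y) \<le> 1 + real CARD('h) * (S + T * S' * (Y + 1))"
    using norm_network_grad_le assms by blast
  moreover have "norm (sq_loss_grad f p \<sigma> \<sigma>' \<theta> y) =
      2 * \<bar>f y - network \<sigma> \<theta> y\<bar> * p y * norm (network_grad \<sigma> \<sigma>' \<theta> y)"
    unfolding sq_loss_grad_def norm_scaleR abs_mult using assms(4) by simp
  ultimately show ?thesis
    using assms(4,5) by (simp add: mult_mono)
qed

lemma measurable_sq_loss [measurable]:
  assumes "\<sigma> \<in> borel_measurable borel" "S \<in> sets lebesgue"
    "f \<in> borel_measurable (lebesgue_on S)" "p \<in> borel_measurable (lebesgue_on S)"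
  shows "sq_loss f p \<sigma> \<theta> \<in> borel_measurable (lebesgue_on S)"
  unfolding sq_loss_def using assms by measurable

lemma measurable_sq_loss_grad [measurable]:
  assumes "\<sigma> \<in> borel_measurable borel" "\<sigma>' \<in> borel_measurable borel" "S \<in> sets lebesgue"
    "f \<in> borel_measurable (lebesgue_on S)" "p \<in> borel_measurable (lebesgue_on S)"
  shows "sq_loss_grad f p \<sigma> \<sigma>' \<theta> \<in> borel_measurable (lebesgue_on S)"
  unfolding sq_loss_grad_def using assms by measurable

definition relu :: "real \<Rightarrow> real" where
  "relu x = max x 0"

definition heaviside :: "real \<Rightarrow> real" where
  "heaviside x = (if x > 0 then 1 else 0)"

lemma relu_has_real_derivative:
  assumes "x \<noteq> 0"
  shows "(relu has_real_derivative heaviside x) (at x)"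
proof (cases "x > 0")
  case True
  show ?thesis
    by (rule has_field_derivative_transform_within_open[of "\<lambda>x. x" _ x "{0<..}"])
      (use True in \<open>auto simp: relu_def heaviside_def\<close>)
next
  case False
  with assms have "x < 0" by simp
  show ?thesis
    by (rule has_field_derivative_transform_within_open[of "\<lambda>x. 0" _ x "{..<0}"])
      (use \<open>x < 0\<close> in \<open>auto simp: relu_def heaviside_def\<close>)
qed

lemma relu_lipschitz: "1-lipschitz_on A relu"
  by (rule lipschitz_onI) (auto simp: relu_def dist_real_def)

lemma borel_measurable_relu: "relu \<in> borel_measurable borel"
  unfolding relu_def by measurable

lemma borel_measurable_heaviside: "heaviside \<in> borel_measurable borel"
  unfolding heaviside_def by measurable

lemma bounded_heaviside: "bounded (heaviside ` A)"
  by (rule boundedI[where B=1]) (auto simp: heaviside_def)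

definition degenerate :: "('d::finite, 'h::finite) params \<Rightarrow> 'h \<Rightarrow> bool" where
  "degenerate \<theta> i \<longleftrightarrow> bias \<theta> i = 0 \<and> (\<forall>j. wgt \<theta> i j = 0)"

definition shift_degenerate :: "real \<Rightarrow> ('d::finite, 'h::finite) params \<Rightarrow> ('d, 'h) params" where
  "shift_degenerate \<epsilon> \<theta> = (fst \<theta>, (\<chi> i. if degenerate \<theta> i then -\<epsilon> else bias \<theta> i), snd (snd \<theta>))"

lemma inner_neuron_vec_shift_degenerate:
  "inner (shift_degenerate \<epsilon> \<theta>) (neuron_vec y i) =
    (if degenerate \<theta> i then -\<epsilon> else inner \<theta> (neuron_vec y i))"
  by (auto simp: inner_neuron_vec shift_degenerate_def bias_def wgt_def degenerate_def)

lemma inner_outw_vec_shift_degenerate: "inner (shift_degenerate \<epsilon> \<theta>) (outw_vec i) = inner \<theta> (outw_vec i)"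
  by (simp add: inner_outw_vec shift_degenerate_def outw_def)

lemma inner_cst_vec_shift_degenerate: "inner (shift_degenerate \<epsilon> \<theta>) cst_vec = inner \<theta> cst_vec"
  by (simp add: inner_cst_vec shift_degenerate_def cst_def)

lemma not_degenerate_shift_degenerate: "\<epsilon> \<noteq> 0 \<Longrightarrow> \<not> degenerate (shift_degenerate \<epsilon> \<theta>) i"
  by (auto simp: degenerate_def shift_degenerate_def bias_def wgt_def)

lemma dist_shift_degenerate_le:
  fixes \<theta> :: "('d::finite, 'h::finite) params"
  assumes "0 \<le> \<epsilon>"
  shows "dist \<theta> (shift_degenerate \<epsilon> \<theta>) \<le> real CARD('h) * \<epsilon>"
proof -
  have "\<theta> - shift_degenerate \<epsilon> \<theta> = (0, (\<chi> i. if degenerate \<theta> i then \<epsilon> else (0::real)), 0, 0)"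
    by (cases \<theta>) (auto simp: shift_degenerate_def vec_eq_iff bias_def degenerate_def zero_prod_def)
  then have "dist \<theta> (shift_degenerate \<epsilon> \<theta>) = norm (\<chi> i. if degenerate \<theta> i then \<epsilon> else (0::real) :: real^'h)"
    by (simp add: dist_norm norm_Pair)
  also have "\<dots> \<le> (\<Sum>i\<in>UNIV. \<bar>(\<chi> i. if degenerate \<theta> i then \<epsilon> else (0::real) :: real^'h) $ i\<bar>)"
    by (rule norm_le_l1_cart)
  also have "\<dots> \<le> (\<Sum>i\<in>(UNIV::'h set). \<epsilon>)"
    by (rule sum_mono) (use assms in auto)
  finally show ?thesis
    by simp
qed

lemma sq_loss_grad_relu_shift_degenerate:
  assumes "0 \<le> \<epsilon>"
  shows "sq_loss_grad f p relu heaviside (shift_degenerate \<epsilon> \<theta>) = sq_loss_grad f p relu heaviside \<theta>"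
proof -
  have "degenerate \<theta> i \<Longrightarrow> inner \<theta> (neuron_vec y i) = 0" for i y
    by (simp add: inner_neuron_vec degenerate_def)
  then have "relu (inner (shift_degenerate \<epsilon> \<theta>) (neuron_vec y i)) = relu (inner \<theta> (neuron_vec y i))"
    "heaviside (inner (shift_degenerate \<epsilon> \<theta>) (neuron_vec y i)) = heaviside (inner \<theta> (neuron_vec y i))" for y i
    using assms by (auto simp: inner_neuron_vec_shift_degenerate relu_def heaviside_def)
  then show ?thesis
    unfolding sq_loss_grad_def network_grad_def network_def
    by (simp add: inner_outw_vec_shift_degenerate inner_cst_vec_shift_degenerate)
qed

lemma AE_inner_neuron_vec_nonzero:
  assumes "\<not> degenerate \<theta> i"
  shows "AE y in lebesgue. inner \<theta> (neuron_vec y i) \<noteq> 0"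
proof -
  have "fst \<theta> $ i \<noteq> 0 \<or> - bias \<theta> i \<noteq> 0"
    using assms by (auto simp: degenerate_def wgt_def)
  then have "negligible {y. inner (fst \<theta> $ i) y = - bias \<theta> i}"
    by (rule negligible_hyperplane)
  then have "{y. inner (fst \<theta> $ i) y = - bias \<theta> i} \<in> null_sets lebesgue"
    by (simp add: negligible_iff_null_sets)
  then show ?thesis
    by (rule AE_I') (auto simp: inner_neuron_vec inner_vec_def wgt_def)
qed

locale regression_problem =
  fixes S :: "(real^'d::finite) set" and f p :: "real^'d \<Rightarrow> real"
  assumes S_lmeasurable: "S \<in> lmeasurable"
    and bounded_S: "bounded S"
    and f_measurable: "f \<in> borel_measurable (lebesgue_on S)"
    and bounded_f: "bounded (f ` S)"
    and p_measurable: "p \<in> borel_measurable (lebesgue_on S)"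
    and p_nonneg: "\<And>y. y \<in> S \<Longrightarrow> 0 \<le> p y"
    and bounded_p: "bounded (p ` S)"
begin

definition risk_with :: "(real \<Rightarrow> real) \<Rightarrow> ('d, 'h::finite) params \<Rightarrow> real" where
  "risk_with \<sigma> \<theta> = integral\<^sup>L (lebesgue_on S) (sq_loss f p \<sigma> \<theta>)"

definition risk_grad_with :: "(real \<Rightarrow> real) \<Rightarrow> (real \<Rightarrow> real) \<Rightarrow> ('d, 'h::finite) params \<Rightarrow> ('d, 'h) params"
  where "risk_grad_with \<sigma> \<sigma>' \<theta> = integral\<^sup>L (lebesgue_on S) (sq_loss_grad f p \<sigma> \<sigma>' \<theta>)"

lemma sets_lebesgue_S: "S \<in> sets lebesgue"
  using S_lmeasurable by (simp add: fmeasurableD)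

lemma finite_measure_S: "finite_measure (lebesgue_on S)"
  using S_lmeasurable by (rule finite_measure_lebesgue_on)

lemma data_bounds:
  obtains Y F P where "\<And>y. y \<in> S \<Longrightarrow> norm y \<le> Y \<and> \<bar>f y\<bar> \<le> F \<and> 0 \<le> p y \<and> p y \<le> P"
proof -
  obtain Y F P where "\<forall>y\<in>S. norm y \<le> Y" "\<forall>y\<in>S. norm (f y) \<le> F" "\<forall>y\<in>S. norm (p y) \<le> P"
    using bounded_S bounded_f bounded_p unfolding bounded_iff by auto
  with that show thesis
    using p_nonneg by fastforce
qed

lemma has_derivative_risk_with:
  fixes \<theta> :: "('d, 'h::finite) params"
  assumes \<sigma>_measurable: "\<sigma> \<in> borel_measurable borel"
    and \<sigma>'_measurable: "\<sigma>' \<in> borel_measurable borel"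
    and \<sigma>_lipschitz: "\<And>M. \<exists>L. L-lipschitz_on {-M..M} \<sigma>"
    and \<sigma>'_bounded: "\<And>M. bounded (\<sigma>' ` {-M..M})"
    and derivative: "AE y in lebesgue_on S. \<forall>i. (\<sigma> has_real_derivative \<sigma>' (inner \<theta> (neuron_vec y i)))
      (at (inner \<theta> (neuron_vec y i)))"
  shows "(risk_with \<sigma> has_derivative (\<lambda>h. inner h (risk_grad_with \<sigma> \<sigma>' \<theta>))) (at \<theta>)"
proof -
  obtain Y F P where data: "\<And>y. y \<in> S \<Longrightarrow> norm y \<le> Y \<and> \<bar>f y\<bar> \<le> F \<and> 0 \<le> p y \<and> p y \<le> P"
    using data_bounds by blast
  define T where "T = norm \<theta> + 1"
  obtain L where L: "L-lipschitz_on {- (T * (Y + 1))..T * (Y + 1)} \<sigma>"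
    using \<sigma>_lipschitz by blast
  define B where "B = \<bar>\<sigma> 0\<bar> + L * (T * (Y + 1))"
  have B: "\<bar>\<sigma> x\<bar> \<le> B" if "\<bar>x\<bar> \<le> T * (Y + 1)" for x
    unfolding B_def using abs_le_of_lipschitz_on[OF L that] .
  obtain B' where B': "\<And>x. \<bar>x\<bar> \<le> T * (Y + 1) \<Longrightarrow> \<bar>\<sigma>' x\<bar> \<le> B'"
    using \<sigma>'_bounded[of "T * (Y + 1)"] unfolding bounded_iff by fastforce
  have T: "norm \<theta>' \<le> T" if "\<theta>' \<in> ball \<theta> 1" for \<theta>'
    using that norm_triangle_ineq2[of \<theta>' \<theta>] by (auto simp: T_def dist_norm norm_minus_commute)
  note measurable = measurable_sq_loss[OF \<sigma>_measurable sets_lebesgue_S f_measurable p_measurable]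
  show ?thesis
    unfolding risk_with_def[abs_def] risk_grad_with_def
  proof (rule has_derivative_integral[OF finite_measure_S zero_less_one])
    show "norm (sq_loss_grad f p \<sigma> \<sigma>' \<theta> y)
        \<le> 2 * (F + (T + real CARD('h) * (T * B))) * P * (1 + real CARD('h) * (B + T * B' * (Y + 1)))"
      if "y \<in> space (lebesgue_on S)" for y
      using that data[of y] by (intro norm_sq_loss_grad_le B B') (auto simp: T_def)
    show "\<bar>sq_loss f p \<sigma> \<theta>' y - sq_loss f p \<sigma> \<theta> y\<bar> \<le> ((1 + real CARD('h) * (B + T * L * (Y + 1)))
        * (2 * F + 2 * (T + real CARD('h) * (T * B))) * P) * norm (\<theta>' - \<theta>)"
      if "\<theta>' \<in> ball \<theta> 1" "y \<in> space (lebesgue_on S)" for \<theta>' y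
      using that data[of y] T by (intro sq_loss_lipschitz B L) (auto simp: T_def)
    show "integrable (lebesgue_on S) (sq_loss f p \<sigma> \<theta>)"
    proof -
      interpret finite_measure "lebesgue_on S"
        by (rule finite_measure_S)
      have "\<bar>sq_loss f p \<sigma> \<theta> y\<bar> \<le> (F + (T + real CARD('h) * (T * B)))\<^sup>2 * P" if "y \<in> S" for y
        using data[OF that] by (intro abs_sq_loss_le B) (auto simp: T_def)
      then show ?thesis
        using measurable[of \<theta>] by (intro integrable_const_bound[where B="(F + (T + real CARD('h) * (T * B)))\<^sup>2 * P"])
          auto
    qed
    show "AE y in lebesgue_on S.
        ((\<lambda>\<theta>. sq_loss f p \<sigma> \<theta> y) has_derivative (\<lambda>h. inner h (sq_loss_grad f p \<sigma> \<sigma>' \<theta> y))) (at \<theta>)"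
      using derivative by eventually_elim (auto intro: has_derivative_sq_loss)
  qed (rule measurable measurable_sq_loss_grad[OF \<sigma>_measurable \<sigma>'_measurable sets_lebesgue_S f_measurable p_measurable])+
qed

lemma gderiv_risk_with_C1:
  fixes \<theta> :: "('d, 'h::finite) params"
  assumes derivative: "\<And>x. (\<sigma> has_real_derivative \<sigma>' x) (at x)"
    and continuous: "continuous_on UNIV \<sigma>'"
  shows "GDERIV (risk_with \<sigma>) \<theta> :> risk_grad_with \<sigma> \<sigma>' \<theta>"
  unfolding gderiv_def
proof (rule has_derivative_risk_with)
  have "continuous_on UNIV \<sigma>"
    using derivative by (meson DERIV_isCont continuous_at_imp_continuous_on)
  then show "\<sigma> \<in> borel_measurable borel"
    by (rule borel_measurable_continuous_onI)
  show "\<sigma>' \<in> borel_measurable borel"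
    using continuous by (rule borel_measurable_continuous_onI)
  show bounded: "bounded (\<sigma>' ` {-M..M})" for M
    by (intro compact_imp_bounded compact_continuous_image continuous_on_subset[OF continuous]) auto
  show "\<exists>L. L-lipschitz_on {-M..M} \<sigma>" for M
  proof -
    obtain C where C: "\<And>x. x \<in> {-M..M} \<Longrightarrow> norm (\<sigma>' x) \<le> C"
      using bounded[of M] unfolding bounded_iff by blast
    have "norm (\<sigma> x - \<sigma> y) \<le> max C 0 * norm (x - y)" if "x \<in> {-M..M}" "y \<in> {-M..M}" for x y
      using that C derivative
      by (intro field_differentiable_bound[where S="{-M..M}" and f'=\<sigma>'])
        (auto intro: has_field_derivative_at_within order_trans[OF _ max.cobounded1])
    then have "(max C 0)-lipschitz_on {-M..M} \<sigma>"
      by (intro lipschitz_onI) (auto simp: dist_norm)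
    then show ?thesis ..
  qed
qed (use derivative in auto)

lemma risk_grad_with_tendsto:
  fixes \<sigma>s \<sigma>s' :: "nat \<Rightarrow> real \<Rightarrow> real" and \<theta> :: "('d, 'h::finite) params"
  assumes measurable: "\<And>r. \<sigma>s r \<in> borel_measurable borel" "\<And>r. \<sigma>s' r \<in> borel_measurable borel"
      "\<sigma> \<in> borel_measurable borel" "\<sigma>' \<in> borel_measurable borel"
    and tendsto: "\<And>x. (\<lambda>r. \<sigma>s r x) \<longlonglongrightarrow> \<sigma> x" "\<And>x. (\<lambda>r. \<sigma>s' r x) \<longlonglongrightarrow> \<sigma>' x"
    and uniformly_bounded: "\<And>M. \<exists>C. \<forall>r. \<forall>x\<in>{-M..M}. \<bar>\<sigma>s r x\<bar> \<le> C \<and> \<bar>\<sigma>s' r x\<bar> \<le> C"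
  shows "(\<lambda>r. risk_grad_with (\<sigma>s r) (\<sigma>s' r) \<theta>) \<longlonglongrightarrow> risk_grad_with \<sigma> \<sigma>' \<theta>"
proof -
  interpret finite_measure "lebesgue_on S"
    by (rule finite_measure_S)
  obtain Y F P where data: "\<And>y. y \<in> S \<Longrightarrow> norm y \<le> Y \<and> \<bar>f y\<bar> \<le> F \<and> 0 \<le> p y \<and> p y \<le> P"
    using data_bounds by blast
  define T where "T = norm \<theta>"
  obtain C where "\<forall>r. \<forall>x\<in>{- (T * (Y + 1))..T * (Y + 1)}. \<bar>\<sigma>s r x\<bar> \<le> C \<and> \<bar>\<sigma>s' r x\<bar> \<le> C"
    using uniformly_bounded by blast
  then have C: "\<bar>\<sigma>s r x\<bar> \<le> C" "\<bar>\<sigma>s' r x\<bar> \<le> C" if "\<bar>x\<bar> \<le> T * (Y + 1)" for r x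
    using that by (auto simp: abs_le_iff)
  show ?thesis
    unfolding risk_grad_with_def
  proof (rule integral_dominated_convergence[where
        w="\<lambda>_. 2 * (F + (T + real CARD('h) * (T * C))) * P * (1 + real CARD('h) * (C + T * C * (Y + 1)))"])
    show "AE y in lebesgue_on S. (\<lambda>r. sq_loss_grad f p (\<sigma>s r) (\<sigma>s' r) \<theta> y) \<longlonglongrightarrow> sq_loss_grad f p \<sigma> \<sigma>' \<theta> y"
      unfolding sq_loss_grad_def network_grad_def network_def
      by (intro AE_I2 tendsto_intros tendsto)
    show "AE y in lebesgue_on S. norm (sq_loss_grad f p (\<sigma>s r) (\<sigma>s' r) \<theta> y)
        \<le> 2 * (F + (T + real CARD('h) * (T * C))) * P * (1 + real CARD('h) * (C + T * C * (Y + 1)))" for r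
    proof (rule AE_I2)
      fix y
      assume "y \<in> space (lebesgue_on S)"
      then have "norm y \<le> Y \<and> \<bar>f y\<bar> \<le> F \<and> 0 \<le> p y \<and> p y \<le> P"
        using data by simp
      then show "norm (sq_loss_grad f p (\<sigma>s r) (\<sigma>s' r) \<theta> y)
          \<le> 2 * (F + (T + real CARD('h) * (T * C))) * P * (1 + real CARD('h) * (C + T * C * (Y + 1)))"
        using C by (intro norm_sq_loss_grad_le) (auto simp: T_def)
    qed
    show "sq_loss_grad f p \<sigma> \<sigma>' \<theta> \<in> borel_measurable (lebesgue_on S)"
      "sq_loss_grad f p (\<sigma>s r) (\<sigma>s' r) \<theta> \<in> borel_measurable (lebesgue_on S)" for r
      using measurable sets_lebesgue_S f_measurable p_measurable by (blast intro: measurable_sq_loss_grad)+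
  qed simp
qed

lemma has_derivative_risk_with_relu:
  fixes \<theta> :: "('d, 'h::finite) params"
  assumes "\<And>i. \<not> degenerate \<theta> i"
  shows "(risk_with relu has_derivative (\<lambda>h. inner h (risk_grad_with relu heaviside \<theta>))) (at \<theta>)"
proof (rule has_derivative_risk_with)
  have "AE y in lebesgue. \<forall>i\<in>UNIV. inner \<theta> (neuron_vec y i) \<noteq> 0"
    using assms by (intro AE_finite_allI AE_inner_neuron_vec_nonzero) auto
  then have "AE y in lebesgue_on S. \<forall>i. inner \<theta> (neuron_vec y i) \<noteq> 0"
    by (auto simp: AE_restrict_space_iff sets_lebesgue_S elim: AE_mp)
  then show "AE y in lebesgue_on S. \<forall>i. (relu has_real_derivative heaviside (inner \<theta> (neuron_vec y i)))
      (at (inner \<theta> (neuron_vec y i)))"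
    by eventually_elim (auto intro: relu_has_real_derivative)
qed (use relu_lipschitz borel_measurable_relu borel_measurable_heaviside bounded_heaviside in auto)

lemma risk_grad_relu_in_limiting_subdiff:
  fixes \<theta> :: "('d, 'h::finite) params"
  shows "risk_grad_with relu heaviside \<theta> \<in> limiting_subdiff (risk_with relu) \<theta>"
proof (rule limiting_subdiffI)
  fix e :: real
  assume "e > 0"
  define \<epsilon> where "\<epsilon> = e / (real CARD('h) + 1)"
  have "\<epsilon> > 0" "real CARD('h) * \<epsilon> < e"
    using \<open>e > 0\<close> by (auto simp: \<epsilon>_def field_simps)
  then have "dist \<theta> (shift_degenerate \<epsilon> \<theta>) < e"
    using dist_shift_degenerate_le[of \<epsilon> \<theta>] by simp
  moreover have "risk_grad_with relu heaviside (shift_degenerate \<epsilon> \<theta>) = risk_grad_with relu heaviside \<theta>"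
    using \<open>\<epsilon> > 0\<close> by (simp add: risk_grad_with_def sq_loss_grad_relu_shift_degenerate)
  ultimately show "\<exists>z. dist \<theta> z < e \<and> risk_grad_with relu heaviside \<theta> \<in> frechet_subdiff (risk_with relu) z"
    using \<open>\<epsilon> > 0\<close> by (metis has_derivative_imp_frechet_subdiff has_derivative_risk_with_relu
        not_degenerate_shift_degenerate less_irrefl)
qed

lemma tendsto_risk_grad_with_relu_approximation:
  fixes R R' :: "nat \<Rightarrow> real \<Rightarrow> real" and \<theta> :: "('d, 'h::finite) params"
  assumes R_deriv: "\<And>r x. r \<ge> 1 \<Longrightarrow> (R r has_real_derivative R' r x) (at x)"
    and R'_cont: "\<And>r. r \<ge> 1 \<Longrightarrow> continuous_on UNIV (R' r)"
    and R_lim: "\<And>x. (\<lambda>r. \<bar>R r x - relu x\<bar> + \<bar>R' r x - heaviside x\<bar>) \<longlonglongrightarrow> 0"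
    and R'_bdd: "\<And>x. \<exists>C. \<forall>r\<ge>1. \<forall>y\<in>{-\<bar>x\<bar>..\<bar>x\<bar>}. \<bar>R' r y\<bar> \<le> C"
  shows "(\<lambda>r. risk_grad_with (R r) (R' r) \<theta>) \<longlonglongrightarrow> risk_grad_with relu heaviside \<theta>"
proof (rule LIMSEQ_imp_Suc, rule risk_grad_with_tendsto)
  have R_tendsto: "(\<lambda>r. R r x) \<longlonglongrightarrow> relu x" "(\<lambda>r. R' r x) \<longlonglongrightarrow> heaviside x" for x
  proof -
    have "(\<lambda>r. \<bar>R r x - relu x\<bar>) \<longlonglongrightarrow> 0" "(\<lambda>r. \<bar>R' r x - heaviside x\<bar>) \<longlonglongrightarrow> 0"
      by (rule tendsto_sandwich[OF _ _ tendsto_const R_lim[of x]]; simp)+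
    then show "(\<lambda>r. R r x) \<longlonglongrightarrow> relu x" "(\<lambda>r. R' r x) \<longlonglongrightarrow> heaviside x"
      by (simp_all add: LIM_zero_iff tendsto_rabs_zero_iff)
  qed
  then show "(\<lambda>r. R (Suc r) x) \<longlonglongrightarrow> relu x" "(\<lambda>r. R' (Suc r) x) \<longlonglongrightarrow> heaviside x" for x
    by (auto intro: LIMSEQ_Suc)
  show "R (Suc r) \<in> borel_measurable borel" for r
    using R_deriv[of "Suc r"]
    by (intro borel_measurable_continuous_onI continuous_at_imp_continuous_on ballI DERIV_isCont) auto
  show "R' (Suc r) \<in> borel_measurable borel" for r
    using R'_cont[of "Suc r"] by (simp add: borel_measurable_continuous_onI)
  show "\<exists>C. \<forall>r. \<forall>x\<in>{-M..M}. \<bar>R (Suc r) x\<bar> \<le> C \<and> \<bar>R' (Suc r) x\<bar> \<le> C" for M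
  proof -
    obtain C where C: "\<And>r x. x \<in> {-M..M} \<Longrightarrow> \<bar>R' (Suc r) x\<bar> \<le> C"
      using R'_bdd[of M] by fastforce
    have "convergent (\<lambda>r. R (Suc r) 0)"
      using R_tendsto(1)[of 0] by (auto intro: LIMSEQ_Suc simp: convergent_def)
    then have "\<exists>B. \<forall>r. \<forall>x\<in>{-M..M}. \<bar>R (Suc r) x\<bar> \<le> B"
      using R_deriv C by (intro uniformly_bounded_of_derivative_bound[where \<sigma>'="\<lambda>r. R' (Suc r)"]) auto
    then obtain B where B: "\<And>r x. x \<in> {-M..M} \<Longrightarrow> \<bar>R (Suc r) x\<bar> \<le> B"
      by blast
    have "\<bar>R (Suc r) x\<bar> \<le> max B C \<and> \<bar>R' (Suc r) x\<bar> \<le> max B C" if "x \<in> {-M..M}" for r x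
      using B[of x r] C[of x r] that by (auto simp: le_max_iff_disj)
    then show ?thesis
      by blast
  qed
qed (rule borel_measurable_relu borel_measurable_heaviside)+

lemma risk_eq_risk_with_relu:
  assumes "S = cube a b"
  shows "risk a b f p = risk_with relu"
proof
  show "risk a b f p \<theta> = risk_with relu \<theta>" for \<theta>
    unfolding risk_def risk_with_def unfolding assms
    by (intro Bochner_Integration.integral_cong)
      (simp_all add: sq_loss_def network_def realization_def relu_def inner_neuron_vec inner_outw_vec inner_cst_vec)
qed

lemma approx_risk_eq_risk_with:
  assumes "S = cube a b"
  shows "approx_risk \<sigma> a b f p = risk_with \<sigma>"
proof
  show "approx_risk \<sigma> a b f p \<theta> = risk_with \<sigma> \<theta>" for \<theta>
    unfolding approx_risk_def risk_with_def unfolding assms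
    by (intro Bochner_Integration.integral_cong)
      (simp_all add: sq_loss_def network_def diff_diff_eq inner_neuron_vec inner_outw_vec inner_cst_vec)
qed

end

lemma regression_problem_cube:
  assumes "continuous_on (cube a b) f" "p \<in> borel_measurable (lebesgue_on (cube a b))"
    "\<forall>y\<in>cube a b. 0 \<le> p y" "bounded (p ` cube a b)"
  shows "regression_problem (cube a b) f p"
proof
  show "f \<in> borel_measurable (lebesgue_on (cube a b))"
    using assms(1) by (rule continuous_imp_measurable_on_sets_lebesgue) (simp add: cube_def)
  show "bounded (f ` cube a b)"
    using assms(1) by (intro compact_imp_bounded compact_continuous_image) (simp_all add: cube_def)
qed (use assms(2-4) in \<open>auto simp: cube_def\<close>)

theorem proposition2p12:
  fixes a b :: real
    and f :: "real^'d::finite \<Rightarrow> real"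
    and p :: "real^'d \<Rightarrow> real"
    and R R' :: "nat \<Rightarrow> real \<Rightarrow> real"
    and G :: "('d, 'h::finite) params \<Rightarrow> ('d, 'h) params"
    and \<theta> :: "('d, 'h) params"
  assumes ab: "a < b"
    and f_cont: "continuous_on (cube a b) f"
    and p_meas: "p \<in> borel_measurable (lebesgue_on (cube a b))"
    and p_nonneg: "\<forall>y\<in>cube a b. 0 \<le> p y"
    and p_bdd: "bounded (p ` cube a b)"
    and R_deriv: "\<forall>r\<ge>1. \<forall>x. (R r has_real_derivative R' r x) (at x)"
    and R'_cont: "\<forall>r\<ge>1. continuous_on UNIV (R' r)"
    and R_lim: "\<forall>x. (\<lambda>r. \<bar>R r x - max x 0\<bar> + \<bar>R' r x - (if x > 0 then 1 else 0)\<bar>) \<longlonglongrightarrow> 0"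
    and R'_bdd: "\<forall>x. \<exists>C. \<forall>r\<ge>1. \<forall>y\<in>{-\<bar>x\<bar>..\<bar>x\<bar>}. \<bar>R' r y\<bar> \<le> C"
    and G_def: "\<forall>\<phi> v. (\<exists>D. (\<forall>r\<ge>1. GDERIV (approx_risk (R r) a b f p) \<phi> :> D r) \<and> D \<longlonglongrightarrow> v)
                  \<longrightarrow> G \<phi> = v"
  shows "G \<theta> \<in> limiting_subdiff (risk a b f p) \<theta>"
proof -
  interpret regression_problem "cube a b" f p
    using f_cont p_meas p_nonneg p_bdd by (rule regression_problem_cube)
  have "(\<lambda>r. risk_grad_with (R r) (R' r) \<theta>) \<longlonglongrightarrow> risk_grad_with relu heaviside \<theta>"
    using R_deriv R'_cont R_lim R'_bdd
    by (intro tendsto_risk_grad_with_relu_approximation) (auto simp: relu_def heaviside_def)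
  moreover have "GDERIV (approx_risk (R r) a b f p) \<theta> :> risk_grad_with (R r) (R' r) \<theta>" if "r \<ge> 1" for r
    unfolding approx_risk_eq_risk_with[OF refl] using R_deriv R'_cont that by (intro gderiv_risk_with_C1) auto
  ultimately have "G \<theta> = risk_grad_with relu heaviside \<theta>"
    using G_def[rule_format, OF exI[of _ "\<lambda>r. risk_grad_with (R r) (R' r) \<theta>"]] by blast
  then show ?thesis
    using risk_grad_relu_in_limiting_subdiff by (simp add: risk_eq_risk_with_relu[OF refl])
qed

end
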